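(* Let $G$ be a group with subgroups $H,G_1,G_2$ such that $H\le G_1$ and $H\le G_2$, and suppose there is $t\in G$ with $t^{-1}G_1t=G_2$ and $t^{-1}ht=h$ for all $h\in H$. Then for each $k\ge 1$ the map $H_k(G_1,H)\to H_k(G,G_2)$ induced by the inclusion equals the composite $$H_k(G_1,H)\xrightarrow{\ \partial\ }H_{k-1}(H)\xrightarrow{(-1)^k(\,\_\,\times t)}H_k(G,G_2),$$ where $\partial$ is the connecting homomorphism and $\_\times t$ is induced by the chain map $C_{k-1}(H)\to C_k(G)$ sending a bar chain $(h_1,\dots,h_{k-1})$ to $$\sum_{j=0}^{k-1}(-1)^{k-1-j}\,(h_1,\dots,h_j,t,h_{j+1},\dots,h_{k-1}),$$ followed by the projection to relative homology.
   Context: Group homology is computed with integer coefficients via the bar construction: $C_k(G)$ is the free abelian group on $k$-tuples $(g_1,\dots,g_k)$ of elements of $G$ with the usual bar differential; relative homology $H_*(G,K)$ for $K\le G$ is the homology of $C_*(G)/C_*(K)$. *)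

theory Defs
  imports "HOL-Algebra.Group"
begin

definition chains :: "'a set \<Rightarrow> nat \<Rightarrow> ('a list \<Rightarrow> int) set" where
  "chains A k = {c. finite {x. c x \<noteq> 0} \<and> (\<forall>x. c x \<noteq> 0 \<longrightarrow> length x = k \<and> set x \<subseteq> A)}"

definition bar_face :: "('a, 'b) monoid_scheme \<Rightarrow> 'a list \<Rightarrow> nat \<Rightarrow> 'a list" where
  "bar_face G x i =
     (if i = 0 then tl x
      else if i = length x then butlast x
      else take (i - 1) x @ [x ! (i - 1) \<otimes>\<^bsub>G\<^esub> x ! i] @ drop (i + 1) x)"

definition bar_d_gen :: "('a, 'b) monoid_scheme \<Rightarrow> 'a list \<Rightarrow> 'a list \<Rightarrow> int" where
  "bar_d_gen G x y =
     (if length x = 0 then 0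
      else (\<Sum>i\<in>{0..length x}. (-1) ^ i * (if bar_face G x i = y then 1 else 0)))"

definition bar_d :: "('a, 'b) monoid_scheme \<Rightarrow> ('a list \<Rightarrow> int) \<Rightarrow> 'a list \<Rightarrow> int" where
  "bar_d G c = (\<lambda>y. \<Sum>x\<in>{x. c x \<noteq> 0}. c x * bar_d_gen G x y)"

definition cross_gen :: "'a \<Rightarrow> 'a list \<Rightarrow> 'a list \<Rightarrow> int" where
  "cross_gen t x y = (\<Sum>j\<in>{0..length x}.
       (-1) ^ (length x - j) * (if take j x @ [t] @ drop j x = y then 1 else 0))"

definition cross :: "'a \<Rightarrow> ('a list \<Rightarrow> int) \<Rightarrow> 'a list \<Rightarrow> int" where
  "cross t c = (\<lambda>y. \<Sum>x\<in>{x. c x \<noteq> 0}. c x * cross_gen t x y)"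

text \<open>Relative homology H_k(A,B) = homology of C_*(A)/C_*(B), for subgroups B \<subseteq> A of G.
  Classes are represented as cosets (sets of chains in C_k(A)) of the relative boundaries.\<close>

definition rel_cycles :: "('a, 'b) monoid_scheme \<Rightarrow> 'a set \<Rightarrow> 'a set \<Rightarrow> nat \<Rightarrow> ('a list \<Rightarrow> int) set" where
  "rel_cycles G A B k = {z \<in> chains A k. bar_d G z \<in> chains B (k - 1)}"

definition rel_bdry :: "('a, 'b) monoid_scheme \<Rightarrow> 'a set \<Rightarrow> 'a set \<Rightarrow> nat \<Rightarrow> ('a list \<Rightarrow> int) set" where
  "rel_bdry G A B k = {(\<lambda>y. bar_d G w y + u y) | w u. w \<in> chains A (Suc k) \<and> u \<in> chains B k}"

definition rel_class :: "('a, 'b) monoid_scheme \<Rightarrow> 'a set \<Rightarrow> 'a set \<Rightarrow> nat \<Rightarrow> ('a list \<Rightarrow> int) \<Rightarrow> ('a list \<Rightarrow> int) set" where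
  "rel_class G A B k z = {(\<lambda>y. z y + b y) | b. b \<in> rel_bdry G A B k}"

definition rel_homology :: "('a, 'b) monoid_scheme \<Rightarrow> 'a set \<Rightarrow> 'a set \<Rightarrow> nat \<Rightarrow> ('a list \<Rightarrow> int) set set" where
  "rel_homology G A B k = rel_class G A B k ` rel_cycles G A B k"

definition abs_cycles :: "('a, 'b) monoid_scheme \<Rightarrow> 'a set \<Rightarrow> nat \<Rightarrow> ('a list \<Rightarrow> int) set" where
  "abs_cycles G A k = {z \<in> chains A k. bar_d G z = (\<lambda>_. 0)}"

definition abs_bdry :: "('a, 'b) monoid_scheme \<Rightarrow> 'a set \<Rightarrow> nat \<Rightarrow> ('a list \<Rightarrow> int) set" where
  "abs_bdry G A k = bar_d G ` chains A (Suc k)"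

definition abs_class :: "('a, 'b) monoid_scheme \<Rightarrow> 'a set \<Rightarrow> nat \<Rightarrow> ('a list \<Rightarrow> int) \<Rightarrow> ('a list \<Rightarrow> int) set" where
  "abs_class G A k z = {(\<lambda>y. z y + b y) | b. b \<in> abs_bdry G A k}"

definition abs_homology :: "('a, 'b) monoid_scheme \<Rightarrow> 'a set \<Rightarrow> nat \<Rightarrow> ('a list \<Rightarrow> int) set set" where
  "abs_homology G A k = abs_class G A k ` abs_cycles G A k"

text \<open>Maps on homology, defined through (arbitrary) representatives.\<close>

definition induced_incl :: "('a, 'b) monoid_scheme \<Rightarrow> 'a set \<Rightarrow> 'a set \<Rightarrow> nat \<Rightarrow> ('a list \<Rightarrow> int) set \<Rightarrow> ('a list \<Rightarrow> int) set" where
  "induced_incl G A' B' k X = rel_class G A' B' k (SOME z. z \<in> X)"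

definition connecting :: "('a, 'b) monoid_scheme \<Rightarrow> 'a set \<Rightarrow> nat \<Rightarrow> ('a list \<Rightarrow> int) set \<Rightarrow> ('a list \<Rightarrow> int) set" where
  "connecting G B k X = abs_class G B (k - 1) (bar_d G (SOME z. z \<in> X))"

definition cross_hom :: "('a, 'b) monoid_scheme \<Rightarrow> 'a \<Rightarrow> 'a set \<Rightarrow> 'a set \<Rightarrow> nat \<Rightarrow> ('a list \<Rightarrow> int) set \<Rightarrow> ('a list \<Rightarrow> int) set" where
  "cross_hom G t A' B' k Y = rel_class G A' B' k (cross t (SOME y. y \<in> Y))"

definition rel_scale :: "('a, 'b) monoid_scheme \<Rightarrow> 'a set \<Rightarrow> 'a set \<Rightarrow> nat \<Rightarrow> int \<Rightarrow> ('a list \<Rightarrow> int) set \<Rightarrow> ('a list \<Rightarrow> int) set" where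
  "rel_scale G A B k n X = rel_class G A B k (\<lambda>y. n * (SOME z. z \<in> X) y)"

end

theory Submission
  imports Defs
begin

text \<open>Inserting t into a bar chain and conjugating the entries behind it (g^t = t^-1 g t),
  S(g_1,...,g_m) = \<Sum>_j (-1)^(m-j) (g_1,...,g_j,t,g_(j+1)^t,...,g_m^t),
  is a chain homotopy between the identity of C_*(G) and the chain map induced by conjugation
  with t: dS - Sd = (-1)^k (conj_t - id) in degree k. On chains in H, which t centralizes, S
  is the chain map  _ \<times> t. For a relative cycle z of (G_1,H) the conjugate conj_t z lies in
  C_k(G_2) and \<partial>z in C_(k-1)(H), so the homotopy formula exhibits z as (-1)^k (\<partial>z \<times> t) modulo
  boundaries and chains of G_2.\<close>

section \<open>Finitely supported linear extension\<close>

abbreviation finite_support :: "('x \<Rightarrow> int) \<Rightarrow> bool" where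
  "finite_support c \<equiv> finite {x. c x \<noteq> 0}"

definition lin_ext :: "('x \<Rightarrow> 'y \<Rightarrow> int) \<Rightarrow> ('x \<Rightarrow> int) \<Rightarrow> 'y \<Rightarrow> int" where
  "lin_ext f c = (\<lambda>y. \<Sum>x\<in>{x. c x \<noteq> 0}. c x * f x y)"

definition basis_chain :: "'x \<Rightarrow> 'x \<Rightarrow> int" where
  "basis_chain x = (\<lambda>y. if x = y then 1 else 0)"

definition gen_sum :: "'i set \<Rightarrow> ('i \<Rightarrow> int) \<Rightarrow> ('i \<Rightarrow> 'x) \<Rightarrow> 'x \<Rightarrow> int" where
  "gen_sum I a g = (\<lambda>y. \<Sum>i\<in>I. a i * basis_chain (g i) y)"

lemma finite_support_add:
  "finite_support a \<Longrightarrow> finite_support b \<Longrightarrow> finite_support (\<lambda>x. a x + b x)"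
  by (rule finite_subset[of _ "{x. a x \<noteq> 0} \<union> {x. b x \<noteq> 0}"]) auto

lemma lin_ext_superset:
  assumes "finite S" "{x. c x \<noteq> 0} \<subseteq> S"
  shows "lin_ext f c y = (\<Sum>x\<in>S. c x * f x y)"
  unfolding lin_ext_def using assms by (intro sum.mono_neutral_left) auto

lemma lin_ext_add:
  assumes "finite_support c1" "finite_support c2"
  shows "lin_ext f (\<lambda>x. c1 x + c2 x) y = lin_ext f c1 y + lin_ext f c2 y"
proof -
  let ?S = "{x. c1 x \<noteq> 0} \<union> {x. c2 x \<noteq> 0}"
  have S: "finite ?S" using assms by auto
  have "lin_ext f (\<lambda>x. c1 x + c2 x) y = (\<Sum>x\<in>?S. (c1 x + c2 x) * f x y)"
    by (rule lin_ext_superset[OF S]) auto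
  also have "\<dots> = (\<Sum>x\<in>?S. c1 x * f x y) + (\<Sum>x\<in>?S. c2 x * f x y)"
    by (simp add: distrib_right sum.distrib)
  also have "\<dots> = lin_ext f c1 y + lin_ext f c2 y"
    using lin_ext_superset[OF S, of c1 f y] lin_ext_superset[OF S, of c2 f y] by auto
  finally show ?thesis .
qed

lemma lin_ext_scale: "lin_ext f (\<lambda>x. a * c x) y = a * lin_ext f c y"
proof (cases "a = 0")
  case False
  then have "{x. a * c x \<noteq> 0} = {x. c x \<noteq> 0}" by auto
  then show ?thesis by (simp add: lin_ext_def sum_distrib_left mult.assoc)
qed (simp add: lin_ext_def)

lemma lin_ext_diff:
  assumes "finite_support c1" "finite_support c2"
  shows "lin_ext f (\<lambda>x. c1 x - c2 x) y = lin_ext f c1 y - lin_ext f c2 y"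
  using lin_ext_add[of c1 "\<lambda>x. - c2 x" f y] lin_ext_scale[of f "-1" c2 y] assms by simp

lemma lin_ext_cong: "(\<And>x. c x \<noteq> 0 \<Longrightarrow> f x = g x) \<Longrightarrow> lin_ext f c = lin_ext g c"
  unfolding lin_ext_def by (intro ext sum.cong) auto

lemma lin_ext_fun_diff: "lin_ext f c y - lin_ext g c y = lin_ext (\<lambda>x y. f x y - g x y) c y"
  unfolding lin_ext_def by (simp add: sum_subtractf right_diff_distrib)

lemma lin_ext_fun_scale: "a * lin_ext f c y = lin_ext (\<lambda>x y. a * f x y) c y"
  unfolding lin_ext_def by (simp add: sum_distrib_left algebra_simps)

lemma lin_ext_support: "{y. lin_ext f c y \<noteq> 0} \<subseteq> (\<Union>x\<in>{x. c x \<noteq> 0}. {y. f x y \<noteq> 0})"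
proof
  fix y assume "y \<in> {y. lin_ext f c y \<noteq> 0}"
  then have "(\<Sum>x\<in>{x. c x \<noteq> 0}. c x * f x y) \<noteq> 0" by (simp add: lin_ext_def)
  then obtain x where "x \<in> {x. c x \<noteq> 0}" "c x * f x y \<noteq> 0"
    by (meson sum.not_neutral_contains_not_neutral)
  then show "y \<in> (\<Union>x\<in>{x. c x \<noteq> 0}. {y. f x y \<noteq> 0})" by auto
qed

lemma finite_support_lin_ext:
  "finite_support c \<Longrightarrow> (\<And>x. c x \<noteq> 0 \<Longrightarrow> finite_support (f x)) \<Longrightarrow> finite_support (lin_ext f c)"
  by (rule finite_subset[OF lin_ext_support]) auto

lemma lin_ext_lin_ext:
  assumes "finite_support c" "\<And>x. c x \<noteq> 0 \<Longrightarrow> finite_support (f x)"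
  shows "lin_ext g (lin_ext f c) = lin_ext (\<lambda>x. lin_ext g (f x)) c"
proof
  fix y
  let ?S = "{x. c x \<noteq> 0}"
  let ?T = "\<Union>x\<in>?S. {y. f x y \<noteq> 0}"
  have T: "finite ?T" using assms by auto
  have "lin_ext g (lin_ext f c) y = (\<Sum>x'\<in>?T. lin_ext f c x' * g x' y)"
    by (rule lin_ext_superset[OF T lin_ext_support])
  also have "\<dots> = (\<Sum>x'\<in>?T. \<Sum>x\<in>?S. c x * f x x' * g x' y)"
    by (simp add: lin_ext_def sum_distrib_right)
  also have "\<dots> = (\<Sum>x\<in>?S. \<Sum>x'\<in>?T. c x * f x x' * g x' y)"
    by (rule sum.swap)
  also have "\<dots> = (\<Sum>x\<in>?S. c x * lin_ext g (f x) y)"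
  proof (rule sum.cong[OF refl])
    fix x assume "x \<in> ?S"
    then have "lin_ext g (f x) y = (\<Sum>x'\<in>?T. f x x' * g x' y)"
      by (intro lin_ext_superset[OF T]) auto
    then show "(\<Sum>x'\<in>?T. c x * f x x' * g x' y) = c x * lin_ext g (f x) y"
      by (simp add: sum_distrib_left mult.assoc)
  qed
  also have "\<dots> = lin_ext (\<lambda>x. lin_ext g (f x)) c y" by (simp add: lin_ext_def)
  finally show "lin_ext g (lin_ext f c) y = lin_ext (\<lambda>x. lin_ext g (f x)) c y" .
qed

lemma lin_ext_basis_chain: "finite_support c \<Longrightarrow> lin_ext basis_chain c = c"
  unfolding lin_ext_def basis_chain_def by (rule ext) (auto simp: if_distrib cong: if_cong)

lemma gen_sum_support: "{y. gen_sum I a g y \<noteq> 0} \<subseteq> g ` I"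
  unfolding gen_sum_def basis_chain_def
  by (auto elim!: sum.not_neutral_contains_not_neutral split: if_splits)

lemma finite_support_gen_sum: "finite I \<Longrightarrow> finite_support (gen_sum I a g)"
  by (rule finite_subset[OF gen_sum_support]) auto

lemma lin_ext_gen_sum:
  assumes "finite I"
  shows "lin_ext f (gen_sum I a g) y = (\<Sum>i\<in>I. a i * f (g i) y)"
proof -
  have "lin_ext f (gen_sum I a g) y = (\<Sum>x\<in>g ` I. gen_sum I a g x * f x y)"
    by (rule lin_ext_superset[OF _ gen_sum_support]) (use assms in auto)
  also have "\<dots> = (\<Sum>x\<in>g ` I. \<Sum>i\<in>I. (if g i = x then a i * f x y else 0))"
    unfolding gen_sum_def basis_chain_def sum_distrib_right by (intro sum.cong refl) auto
  also have "\<dots> = (\<Sum>i\<in>I. a i * f (g i) y)"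
    using assms by (subst sum.swap) (simp add: sum.delta)
  finally show ?thesis .
qed

lemma chainsD: "c \<in> chains A k \<Longrightarrow> c x \<noteq> 0 \<Longrightarrow> length x = k \<and> set x \<subseteq> A"
  by (simp add: chains_def)

lemma chains_finite_support: "c \<in> chains A k \<Longrightarrow> finite_support c"
  by (simp add: chains_def)

lemma zero_in_chains: "(\<lambda>_. 0) \<in> chains A k"
  by (simp add: chains_def)

lemma chains_add:
  assumes "c1 \<in> chains A k" "c2 \<in> chains A k"
  shows "(\<lambda>y. c1 y + c2 y) \<in> chains A k"
proof -
  have s: "{x. c1 x + c2 x \<noteq> 0} \<subseteq> {x. c1 x \<noteq> 0} \<union> {x. c2 x \<noteq> 0}" by auto
  show ?thesis using assms finite_subset[OF s] s unfolding chains_def by blast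
qed

lemma chains_scale: "c \<in> chains A k \<Longrightarrow> (\<lambda>y. a * c y) \<in> chains A k"
  unfolding chains_def by (auto intro: finite_subset[of _ "{x. c x \<noteq> 0}"])

lemma chains_diff: "c1 \<in> chains A k \<Longrightarrow> c2 \<in> chains A k \<Longrightarrow> (\<lambda>y. c1 y - c2 y) \<in> chains A k"
  using chains_add[of c1 A k "\<lambda>y. (-1) * c2 y"] chains_scale[of c2 A k "-1"] by simp

lemma chains_mono: "A \<subseteq> B \<Longrightarrow> c \<in> chains A k \<Longrightarrow> c \<in> chains B k"
  unfolding chains_def by auto

lemma lin_ext_in_chains:
  assumes "finite_support c" "\<And>x. c x \<noteq> 0 \<Longrightarrow> f x \<in> chains A n"
  shows "lin_ext f c \<in> chains A n"
proof -
  have "finite_support (lin_ext f c)"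
    using assms by (intro finite_support_lin_ext) (auto simp: chains_def)
  moreover have "\<forall>y. lin_ext f c y \<noteq> 0 \<longrightarrow> length y = n \<and> set y \<subseteq> A"
    using lin_ext_support[of f c] assms(2) unfolding chains_def by blast
  ultimately show ?thesis unfolding chains_def by blast
qed

lemma gen_sum_in_chains:
  assumes "finite I" "\<And>i. i \<in> I \<Longrightarrow> length (g i) = n \<and> set (g i) \<subseteq> A"
  shows "gen_sum I a g \<in> chains A n"
  using finite_support_gen_sum[OF assms(1), of a g] gen_sum_support[of I a g] assms(2)
  unfolding chains_def by blast

section \<open>The bar differential\<close>

lemma length_bar_face:
  "1 \<le> length x \<Longrightarrow> i \<le> length x \<Longrightarrow> length (bar_face G x i) = length x - 1"
  unfolding bar_face_def by auto

lemma nth_bar_face: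
  assumes "i \<le> length x" "p < length x - 1"
  shows "bar_face G x i ! p = (if p + 1 < i then x ! p
            else if p + 1 = i \<and> i < length x then x ! p \<otimes>\<^bsub>G\<^esub> x ! (p + 1) else x ! (p + 1))"
  using assms unfolding bar_face_def by (auto simp: nth_tl nth_butlast nth_append min_def)

lemma set_bar_face:
  assumes "set x \<subseteq> A" "\<And>a b. a \<in> A \<Longrightarrow> b \<in> A \<Longrightarrow> a \<otimes>\<^bsub>G\<^esub> b \<in> A" "i \<le> length x"
  shows "set (bar_face G x i) \<subseteq> A"
proof -
  have "x ! (i - 1) \<in> A" "x ! i \<in> A" if "0 < i" "i < length x"
    using assms(1,3) that by (auto intro!: subsetD[OF assms(1)] nth_mem)
  moreover have "set (tl x) \<subseteq> set x" by (cases x) auto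
  ultimately show ?thesis using assms unfolding bar_face_def
    by (auto dest: list.set_sel(2) in_set_butlastD in_set_takeD in_set_dropD)
qed

lemma (in monoid) bar_face_bar_face:
  assumes x: "set x \<subseteq> carrier G" and ij: "2 \<le> length x" "i \<le> j" "j + 1 \<le> length x"
  shows "bar_face G (bar_face G x (j + 1)) i = bar_face G (bar_face G x i) j"
proof (rule nth_equalityI)
  have l: "length (bar_face G x (j + 1)) = length x - 1" "length (bar_face G x i) = length x - 1"
    using ij by (simp_all add: length_bar_face)
  then show "length (bar_face G (bar_face G x (j + 1)) i) = length (bar_face G (bar_face G x i) j)"
    using ij by (simp add: length_bar_face)
  fix p assume "p < length (bar_face G (bar_face G x (j + 1)) i)"
  then have "p < length x - 2" using ij l by (simp add: length_bar_face)
  moreover have "\<And>q. q < length x \<Longrightarrow> x ! q \<in> carrier G" using x by (auto intro: nth_mem)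
  ultimately show "bar_face G (bar_face G x (j + 1)) i ! p = bar_face G (bar_face G x i) j ! p"
    using ij l by (auto simp: nth_bar_face m_assoc)
qed

lemma bar_d_gen_eq_gen_sum:
  "bar_d_gen G x = (if length x = 0 then (\<lambda>_. 0) else gen_sum {0..length x} (\<lambda>i. (-1)^i) (bar_face G x))"
  unfolding bar_d_gen_def gen_sum_def basis_chain_def by auto

lemma finite_support_bar_d_gen: "finite_support (bar_d_gen G x)"
  unfolding bar_d_gen_eq_gen_sum by (auto intro: finite_support_gen_sum)

lemma lin_ext_bar_d_gen:
  "lin_ext f (bar_d_gen G x) y =
     (if length x = 0 then 0 else (\<Sum>i\<in>{0..length x}. (-1)^i * f (bar_face G x i) y))"
proof (cases "length x = 0")
  case False then show ?thesis by (simp add: bar_d_gen_eq_gen_sum lin_ext_gen_sum)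
qed (simp add: bar_d_gen_eq_gen_sum lin_ext_def)

lemma bar_d_eq_lin_ext: "bar_d G c = lin_ext (bar_d_gen G) c"
  by (simp add: bar_d_def lin_ext_def)

lemma finite_support_bar_d: "finite_support c \<Longrightarrow> finite_support (bar_d G c)"
  unfolding bar_d_eq_lin_ext by (intro finite_support_lin_ext finite_support_bar_d_gen)

lemma bar_d_zero: "bar_d G (\<lambda>_. 0) = (\<lambda>_. 0)"
  by (simp add: bar_d_def)

lemma bar_d_add:
  "finite_support a \<Longrightarrow> finite_support b \<Longrightarrow> bar_d G (\<lambda>x. a x + b x) y = bar_d G a y + bar_d G b y"
  unfolding bar_d_eq_lin_ext by (rule lin_ext_add)

lemma bar_d_diff:
  "finite_support a \<Longrightarrow> finite_support b \<Longrightarrow> bar_d G (\<lambda>x. a x - b x) y = bar_d G a y - bar_d G b y"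
  unfolding bar_d_eq_lin_ext by (rule lin_ext_diff)

lemma bar_d_scale: "bar_d G (\<lambda>x. a * c x) y = a * bar_d G c y"
  unfolding bar_d_eq_lin_ext by (rule lin_ext_scale)

lemma bar_d_in_chains:
  assumes "\<And>a b. a \<in> A \<Longrightarrow> b \<in> A \<Longrightarrow> a \<otimes>\<^bsub>G\<^esub> b \<in> A" "c \<in> chains A k"
  shows "bar_d G c \<in> chains A (k - 1)"
  unfolding bar_d_eq_lin_ext
proof (rule lin_ext_in_chains[OF chains_finite_support[OF assms(2)]])
  fix x assume "c x \<noteq> 0"
  then have x: "length x = k" "set x \<subseteq> A" using chainsD[OF assms(2)] by auto
  show "bar_d_gen G x \<in> chains A (k - 1)"
  proof (cases "length x = 0")
    case False
    have "gen_sum {0..length x} (\<lambda>i. (-1)^i) (bar_face G x) \<in> chains A (k - 1)"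
      using length_bar_face[of x _ G] False set_bar_face[OF x(2) assms(1)] x(1)
      by (intro gen_sum_in_chains) auto
    then show ?thesis unfolding bar_d_gen_eq_gen_sum using False by simp
  qed (simp add: bar_d_gen_eq_gen_sum zero_in_chains)
qed

text \<open>The faces of \<partial>(g_1,...,g_n) cancel in pairs by the simplicial identity: the term
  indexed by (j+1, i) against the term indexed by (i, j) for i \<le> j.\<close>

lemma (in monoid) bar_d_bar_d_gen:
  assumes x: "set x \<subseteq> carrier G"
  shows "lin_ext (bar_d_gen G) (bar_d_gen G x) y = 0"
proof -
  define n where "n = length x"
  consider "n = 0" | "n = 1" | "2 \<le> n" by linarith
  then show ?thesis
  proof cases
    case 1 then show ?thesis by (simp add: lin_ext_bar_d_gen n_def)
  next
    case 2
    then have "bar_face G x i = []" if "i \<le> n" for i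
      using length_bar_face[of x i G] that n_def 2 by auto
    then show ?thesis using 2 by (simp add: lin_ext_bar_d_gen n_def bar_d_gen_def)
  next
    case 3
    define F where "F = (\<lambda>(i::nat, j::nat). (-1::int)^i * ((-1)^j *
        (if bar_face G (bar_face G x i) j = y then 1 else 0)))"
    define P where "P = {0..n} \<times> {0..n - 1}"
    define A where "A = {p \<in> P. snd p < fst p}"
    define B where "B = {p \<in> P. fst p \<le> snd p}"
    have l: "length (bar_face G x i) = n - 1" "length (bar_face G x i) \<noteq> 0" if "i \<le> n" for i
      using length_bar_face[of x i G] that n_def 3 by auto
    have "lin_ext (bar_d_gen G) (bar_d_gen G x) y =
        (\<Sum>i\<in>{0..n}. (-1)^i * bar_d_gen G (bar_face G x i) y)"
      using 3 n_def by (auto simp: lin_ext_bar_d_gen)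
    also have "\<dots> = (\<Sum>i\<in>{0..n}. \<Sum>j\<in>{0..n - 1}. F (i, j))"
      using l by (intro sum.cong refl) (simp add: bar_d_gen_def F_def sum_distrib_left)
    also have "\<dots> = sum F P" unfolding P_def by (simp add: sum.cartesian_product)
    also have "\<dots> = sum F A + sum F B"
    proof -
      have "P = A \<union> B" "A \<inter> B = {}" "finite A" "finite B" by (auto simp: A_def B_def P_def)
      then show ?thesis by (simp add: sum.union_disjoint)
    qed
    also have "sum F A = sum (\<lambda>p. F ((\<lambda>(i, j). (j + 1, i)) p)) B"
      by (rule sum.reindex_bij_betw[symmetric], rule bij_betw_byWitness[where f' = "\<lambda>(i, j). (j, i - 1)"])
         (use 3 in \<open>auto simp: A_def B_def P_def\<close>)
    also have "\<dots> = sum (\<lambda>p. - F p) B"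
    proof (rule sum.cong[OF refl])
      fix p assume "p \<in> B"
      then obtain i j where "p = (i, j)" "i \<le> j" "j \<le> n - 1" unfolding B_def P_def by auto
      then show "F ((\<lambda>(i, j). (j + 1, i)) p) = - F p"
        using bar_face_bar_face[OF x, of i j] 3 n_def by (auto simp: F_def)
    qed
    finally show ?thesis by (simp add: sum_negf)
  qed
qed

lemma (in monoid) bar_d_bar_d:
  assumes "c \<in> chains (carrier G) k"
  shows "bar_d G (bar_d G c) = (\<lambda>_. 0)"
proof -
  have "bar_d G (bar_d G c) = lin_ext (\<lambda>x. lin_ext (bar_d_gen G) (bar_d_gen G x)) c"
    unfolding bar_d_eq_lin_ext
    by (rule lin_ext_lin_ext[OF chains_finite_support[OF assms] finite_support_bar_d_gen])
  also have "\<dots> = lin_ext (\<lambda>x _. 0) c"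
    by (rule lin_ext_cong, rule ext, rule bar_d_bar_d_gen) (use chainsD[OF assms] in auto)
  finally show ?thesis by (simp add: lin_ext_def)
qed

section \<open>Conjugation is chain homotopic to the identity\<close>

definition conjugate :: "('a, 'b) monoid_scheme \<Rightarrow> 'a \<Rightarrow> 'a \<Rightarrow> 'a" where
  "conjugate G t g = inv\<^bsub>G\<^esub> t \<otimes>\<^bsub>G\<^esub> g \<otimes>\<^bsub>G\<^esub> t"

definition insert_conj :: "('a, 'b) monoid_scheme \<Rightarrow> 'a \<Rightarrow> nat \<Rightarrow> 'a list \<Rightarrow> 'a list" where
  "insert_conj G t j x = take j x @ [t] @ map (conjugate G t) (drop j x)"

definition conj_homotopy :: "('a, 'b) monoid_scheme \<Rightarrow> 'a \<Rightarrow> 'a list \<Rightarrow> 'a list \<Rightarrow> int" where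
  "conj_homotopy G t x = gen_sum {0..length x} (\<lambda>j. (-1)^(length x - j)) (\<lambda>j. insert_conj G t j x)"

definition map_basis :: "('a \<Rightarrow> 'a) \<Rightarrow> 'a list \<Rightarrow> 'a list \<Rightarrow> int" where
  "map_basis f x = basis_chain (map f x)"

lemma length_insert_conj: "j \<le> length x \<Longrightarrow> length (insert_conj G t j x) = Suc (length x)"
  by (simp add: insert_conj_def)

lemma nth_insert_conj:
  "j \<le> length x \<Longrightarrow> p < Suc (length x) \<Longrightarrow>
   insert_conj G t j x ! p = (if p < j then x ! p else if p = j then t else conjugate G t (x ! (p - 1)))"
  by (auto simp: insert_conj_def nth_append min_def)

lemma lin_ext_conj_homotopy:
  "lin_ext f (conj_homotopy G t x) y = (\<Sum>j\<in>{0..length x}. (-1)^(length x - j) * f (insert_conj G t j x) y)"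
  unfolding conj_homotopy_def by (simp add: lin_ext_gen_sum)

lemma finite_support_conj_homotopy: "finite_support (conj_homotopy G t x)"
  unfolding conj_homotopy_def by (simp add: finite_support_gen_sum)

lemma lin_ext_bar_d_gen_conj_homotopy:
  assumes m: "length x = Suc m"
  shows "lin_ext (bar_d_gen G) (conj_homotopy G t x) y =
    (\<Sum>(i, j)\<in>{0..Suc (Suc m)} \<times> {0..Suc m}.
       (-1)^(Suc m - j) * ((-1)^i * basis_chain (bar_face G (insert_conj G t j x) i) y))"
    (is "_ = sum ?F _")
proof -
  have "lin_ext (bar_d_gen G) (conj_homotopy G t x) y =
      (\<Sum>j\<in>{0..Suc m}. (-1)^(Suc m - j) * bar_d_gen G (insert_conj G t j x) y)"
    by (simp add: lin_ext_conj_homotopy m)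
  also have "\<dots> = (\<Sum>j\<in>{0..Suc m}. \<Sum>i\<in>{0..Suc (Suc m)}. ?F (i, j))"
  proof (rule sum.cong[OF refl])
    fix j assume "j \<in> {0..Suc m}"
    then have "bar_d_gen G (insert_conj G t j x) y =
        (\<Sum>i\<in>{0..Suc (Suc m)}. (-1)^i * basis_chain (bar_face G (insert_conj G t j x) i) y)"
      using m by (simp add: bar_d_gen_def basis_chain_def length_insert_conj)
    then show "(-1)^(Suc m - j) * bar_d_gen G (insert_conj G t j x) y =
        (\<Sum>i\<in>{0..Suc (Suc m)}. ?F (i, j))"
      by (simp only: sum_distrib_left prod.case)
  qed
  also have "\<dots> = (\<Sum>i\<in>{0..Suc (Suc m)}. \<Sum>j\<in>{0..Suc m}. ?F (i, j))"
    by (rule sum.swap)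
  finally show ?thesis
    by (simp only: sum.cartesian_product prod.case)
qed

lemma lin_ext_conj_homotopy_bar_d_gen:
  assumes m: "length x = Suc m"
  shows "lin_ext (conj_homotopy G t) (bar_d_gen G x) y =
    (\<Sum>(i, j)\<in>{0..Suc m} \<times> {0..m}.
       (-1)^i * ((-1)^(m - j) * basis_chain (insert_conj G t j (bar_face G x i)) y))"
proof -
  have l: "length (bar_face G x i) = m" if "i \<le> Suc m" for i
    using length_bar_face[of x i G] that m by simp
  have "lin_ext (conj_homotopy G t) (bar_d_gen G x) y =
      (\<Sum>i\<in>{0..Suc m}. (-1)^i * conj_homotopy G t (bar_face G x i) y)"
    by (simp add: lin_ext_bar_d_gen m)
  also have "\<dots> = (\<Sum>(i, j)\<in>{0..Suc m} \<times> {0..m}.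
       (-1)^i * ((-1)^(m - j) * basis_chain (insert_conj G t j (bar_face G x i)) y))"
    unfolding sum.cartesian_product[symmetric] using l
    by (intro sum.cong refl) (simp add: conj_homotopy_def gen_sum_def sum_distrib_left)
  finally show ?thesis .
qed

context group
begin

lemma conjugate_closed: "t \<in> carrier G \<Longrightarrow> a \<in> carrier G \<Longrightarrow> conjugate G t a \<in> carrier G"
  unfolding conjugate_def by simp

lemma conjugate_mult:
  "t \<in> carrier G \<Longrightarrow> a \<in> carrier G \<Longrightarrow> b \<in> carrier G \<Longrightarrow>
    conjugate G t a \<otimes> conjugate G t b = conjugate G t (a \<otimes> b)"
  unfolding conjugate_def by (simp add: m_assoc flip: m_assoc[of t "inv t"])

lemma mult_conjugate: "t \<in> carrier G \<Longrightarrow> a \<in> carrier G \<Longrightarrow> t \<otimes> conjugate G t a = a \<otimes> t"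
  unfolding conjugate_def by (metis inv_closed m_assoc m_closed r_inv l_one)

lemma bar_face_insert_conj_less:
  assumes x: "set x \<subseteq> carrier G" and t: "t \<in> carrier G" and ij: "i < j" "j \<le> length x"
  shows "bar_face G (insert_conj G t j x) i = insert_conj G t (j - 1) (bar_face G x i)"
proof (rule nth_equalityI)
  have l: "length (bar_face G x i) = length x - 1" using ij by (intro length_bar_face) auto
  then show "length (bar_face G (insert_conj G t j x) i) = length (insert_conj G t (j - 1) (bar_face G x i))"
    using ij by (simp add: length_bar_face length_insert_conj)
  fix p assume "p < length (bar_face G (insert_conj G t j x) i)"
  then have "p < length x" using ij by (simp add: length_bar_face length_insert_conj)
  moreover have "\<And>q. q < length x \<Longrightarrow> x ! q \<in> carrier G" using x by (auto intro: nth_mem)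
  ultimately show "bar_face G (insert_conj G t j x) i ! p = insert_conj G t (j - 1) (bar_face G x i) ! p"
    using ij l t by (auto simp: nth_bar_face nth_insert_conj length_insert_conj conjugate_mult)
qed

lemma bar_face_insert_conj_greater:
  assumes x: "set x \<subseteq> carrier G" and t: "t \<in> carrier G" and ij: "j + 1 < i" "i \<le> Suc (length x)"
  shows "bar_face G (insert_conj G t j x) i = insert_conj G t j (bar_face G x (i - 1))"
proof (rule nth_equalityI)
  have l: "length (bar_face G x (i - 1)) = length x - 1" using ij by (intro length_bar_face) auto
  then show "length (bar_face G (insert_conj G t j x) i) = length (insert_conj G t j (bar_face G x (i - 1)))"
    using ij by (simp add: length_bar_face length_insert_conj)
  fix p assume "p < length (bar_face G (insert_conj G t j x) i)"
  then have "p < length x" using ij by (simp add: length_bar_face length_insert_conj)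
  moreover have "\<And>q. q < length x \<Longrightarrow> x ! q \<in> carrier G" using x by (auto intro: nth_mem)
  moreover have "Suc (i - Suc (Suc 0)) = i - Suc 0" using ij by arith
  ultimately show "bar_face G (insert_conj G t j x) i ! p = insert_conj G t j (bar_face G x (i - 1)) ! p"
    using ij l t by (auto simp: nth_bar_face nth_insert_conj length_insert_conj conjugate_mult)
qed

lemma bar_face_insert_conj_shift:
  assumes x: "set x \<subseteq> carrier G" and t: "t \<in> carrier G" and j: "j < length x"
  shows "bar_face G (insert_conj G t j x) (j + 1) = bar_face G (insert_conj G t (j + 1) x) (j + 1)"
proof (rule nth_equalityI)
  show "length (bar_face G (insert_conj G t j x) (j + 1)) = length (bar_face G (insert_conj G t (j + 1) x) (j + 1))"
    using j by (simp add: length_bar_face length_insert_conj)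
  fix p assume "p < length (bar_face G (insert_conj G t j x) (j + 1))"
  then have "p < length x" using j by (simp add: length_bar_face length_insert_conj)
  moreover have "\<And>q. q < length x \<Longrightarrow> x ! q \<in> carrier G" using x by (auto intro: nth_mem)
  ultimately show "bar_face G (insert_conj G t j x) (j + 1) ! p = bar_face G (insert_conj G t (j + 1) x) (j + 1) ! p"
    using j t by (auto simp: nth_bar_face nth_insert_conj length_insert_conj mult_conjugate)
qed

lemma bar_face_insert_conj_first: "bar_face G (insert_conj G t 0 x) 0 = map (conjugate G t) x"
  by (simp add: bar_face_def insert_conj_def)

lemma bar_face_insert_conj_last: "bar_face G (insert_conj G t (length x) x) (Suc (length x)) = x"
  by (simp add: bar_face_def insert_conj_def)

text \<open>In \<partial>S(x) the face i of the insertion at j cancels against a term of S(\<partial>x) unless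
  i \<in> {j, j+1}; the remaining terms telescope.\<close>

lemma bar_face_insert_conj_off_diagonal:
  assumes x: "set x \<subseteq> carrier G" and t: "t \<in> carrier G" and m: "length x = Suc m"
  shows "(\<Sum>(i, j)\<in>{p \<in> {0..Suc (Suc m)} \<times> {0..Suc m}. fst p < snd p \<or> snd p + 1 < fst p}.
            (-1)^(Suc m - j) * ((-1)^i * basis_chain (bar_face G (insert_conj G t j x) i) y))
       = (\<Sum>(i, j)\<in>{0..Suc m} \<times> {0..m}.
            (-1)^i * ((-1)^(m - j) * basis_chain (insert_conj G t j (bar_face G x i)) y))"
    (is "sum ?F _ = sum ?E _")
proof -
  let ?P1 = "{p \<in> {0..Suc (Suc m)} \<times> {0..Suc m}. fst p < snd p}"
  let ?P2 = "{p \<in> {0..Suc (Suc m)} \<times> {0..Suc m}. snd p + 1 < fst p}"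
  let ?Q1 = "{p \<in> {0..Suc m} \<times> {0..m}. fst p \<le> snd p}"
  let ?Q2 = "{p \<in> {0..Suc m} \<times> {0..m}. snd p < fst p}"
  have "sum ?F ?P1 = sum (\<lambda>p. ?F ((\<lambda>(i, j). (i, j + 1)) p)) ?Q1"
    by (rule sum.reindex_bij_betw[symmetric], rule bij_betw_byWitness[where f' = "\<lambda>(i, j). (i, j - 1)"])
       auto
  also have "\<dots> = sum ?E ?Q1"
  proof (rule sum.cong[OF refl])
    fix p assume "p \<in> ?Q1"
    then obtain i j where "p = (i, j)" "i \<le> j" "j \<le> m" by auto
    then show "?F ((\<lambda>(i, j). (i, j + 1)) p) = ?E p"
      using bar_face_insert_conj_less[OF x t, of i "j + 1"] m by auto
  qed
  finally have lower: "sum ?F ?P1 = sum ?E ?Q1" .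
  have "sum ?F ?P2 = sum (\<lambda>p. ?F ((\<lambda>(i, j). (i + 1, j)) p)) ?Q2"
    by (rule sum.reindex_bij_betw[symmetric], rule bij_betw_byWitness[where f' = "\<lambda>(i, j). (i - 1, j)"])
       auto
  also have "\<dots> = sum ?E ?Q2"
  proof (rule sum.cong[OF refl])
    fix p assume "p \<in> ?Q2"
    then obtain i j where p: "p = (i, j)" "j < i" "i \<le> Suc m" by auto
    then have "(-1::int)^(Suc m - j) = - ((-1)^(m - j))" by (simp add: Suc_diff_le)
    then show "?F ((\<lambda>(i, j). (i + 1, j)) p) = ?E p"
      using bar_face_insert_conj_greater[OF x t, of j "i + 1"] p m by auto
  qed
  finally have upper: "sum ?F ?P2 = sum ?E ?Q2" .
  have "sum ?F {p \<in> {0..Suc (Suc m)} \<times> {0..Suc m}. fst p < snd p \<or> snd p + 1 < fst p}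
      = sum ?F (?P1 \<union> ?P2)"
    by (rule arg_cong[where f = "sum ?F"]) auto
  also have "\<dots> = sum ?E ?Q1 + sum ?E ?Q2"
    using lower upper by (subst sum.union_disjoint) auto
  also have "\<dots> = sum ?E (?Q1 \<union> ?Q2)"
    by (subst sum.union_disjoint) auto
  also have "?Q1 \<union> ?Q2 = {0..Suc m} \<times> {0..m}"
    by auto
  finally show ?thesis .
qed

lemma bar_face_insert_conj_diagonal:
  assumes x: "set x \<subseteq> carrier G" and t: "t \<in> carrier G" and m: "length x = Suc m"
  shows "(\<Sum>(i, j)\<in>{p \<in> {0..Suc (Suc m)} \<times> {0..Suc m}. fst p = snd p \<or> fst p = snd p + 1}.
            (-1)^(Suc m - j) * ((-1)^i * basis_chain (bar_face G (insert_conj G t j x) i) y))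
       = (-1)^Suc m * (map_basis (conjugate G t) x y - basis_chain x y)"
    (is "sum ?F _ = _")
proof -
  let ?P3 = "{p \<in> {0..Suc (Suc m)} \<times> {0..Suc m}. fst p = snd p}"
  let ?P4 = "{p \<in> {0..Suc (Suc m)} \<times> {0..Suc m}. fst p = snd p + 1}"
  let ?g = "\<lambda>j. basis_chain (bar_face G (insert_conj G t j x) j) y"
  let ?h = "\<lambda>j. basis_chain (bar_face G (insert_conj G t j x) (Suc j)) y"
  have sign: "(-1::int)^(Suc m - j) * ((-1)^j * a) = (-1)^Suc m * a" if "j \<le> Suc m" for j a
    using that by (simp add: mult.assoc[symmetric] flip: power_add)
  have "sum ?F ?P3 = sum (\<lambda>j. ?F (j, j)) {0..Suc m}"
    by (rule sum.reindex_bij_betw[symmetric], rule bij_betw_byWitness[where f' = fst]) auto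
  also have "\<dots> = (\<Sum>j\<in>{0..Suc m}. (-1)^Suc m * ?g j)"
    by (rule sum.cong[OF refl]) (simp add: sign)
  also have "\<dots> = (-1)^Suc m * sum ?g {0..Suc m}"
    by (simp only: sum_distrib_left)
  finally have P3: "sum ?F ?P3 = (-1)^Suc m * sum ?g {0..Suc m}" .
  have "sum ?F ?P4 = sum (\<lambda>j. ?F (Suc j, j)) {0..Suc m}"
    by (rule sum.reindex_bij_betw[symmetric], rule bij_betw_byWitness[where f' = snd]) auto
  also have "\<dots> = (\<Sum>j\<in>{0..Suc m}. - ((-1)^Suc m * ?h j))"
    by (rule sum.cong[OF refl]) (simp add: sign)
  also have "\<dots> = - ((-1)^Suc m * sum ?h {0..Suc m})"
    by (simp only: sum_negf sum_distrib_left)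
  finally have P4: "sum ?F ?P4 = - ((-1)^Suc m * sum ?h {0..Suc m})" .
  have "sum ?h {0..m} = sum (\<lambda>j. ?g (Suc j)) {0..m}"
    using bar_face_insert_conj_shift[OF x t] m by (intro sum.cong refl) auto
  moreover have "sum ?g {0..Suc m} = ?g 0 + sum (\<lambda>j. ?g (Suc j)) {0..m}"
    by (simp only: sum.atLeast0_atMost_Suc_shift comp_def)
  moreover have "sum ?h {0..Suc m} = sum ?h {0..m} + ?h (Suc m)"
    by (rule sum.atLeast0_atMost_Suc)
  ultimately have "sum ?g {0..Suc m} - sum ?h {0..Suc m} = ?g 0 - ?h (Suc m)"
    by linarith
  moreover have "?g 0 = map_basis (conjugate G t) x y"
    by (simp add: bar_face_insert_conj_first map_basis_def)
  moreover have "?h (Suc m) = basis_chain x y"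
    using bar_face_insert_conj_last[of t x] m by simp
  moreover have "sum ?F ?P3 + sum ?F ?P4 = sum ?F (?P3 \<union> ?P4)" by (rule sum.union_disjoint[symmetric]) auto
  moreover have "?P3 \<union> ?P4 = {p \<in> {0..Suc (Suc m)} \<times> {0..Suc m}. fst p = snd p \<or> fst p = snd p + 1}"
    by auto
  ultimately show ?thesis using P3 P4 by (simp add: algebra_simps)
qed

lemma lin_ext_bar_d_conj_homotopy_gen:
  assumes x: "set x \<subseteq> carrier G" and t: "t \<in> carrier G"
  shows "lin_ext (bar_d_gen G) (conj_homotopy G t x) y - lin_ext (conj_homotopy G t) (bar_d_gen G x) y
       = (-1)^length x * (map_basis (conjugate G t) x y - basis_chain x y)"
proof (cases "length x")
  case 0
  then show ?thesis
    by (simp add: lin_ext_conj_homotopy lin_ext_bar_d_gen insert_conj_def bar_d_gen_def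
        bar_face_def map_basis_def basis_chain_def)
next
  case (Suc m)
  let ?F = "\<lambda>(i, j). (-1::int)^(Suc m - j) * ((-1)^i * basis_chain (bar_face G (insert_conj G t j x) i) y)"
  let ?P = "{0..Suc (Suc m)} \<times> {0..Suc m}"
  have "lin_ext (bar_d_gen G) (conj_homotopy G t x) y = sum ?F ?P"
    by (rule lin_ext_bar_d_gen_conj_homotopy[OF Suc])
  also have "\<dots> = sum ?F ({p \<in> ?P. fst p < snd p \<or> snd p + 1 < fst p}
      \<union> {p \<in> ?P. fst p = snd p \<or> fst p = snd p + 1})"
    by (rule arg_cong[where f = "sum ?F"]) auto
  also have "\<dots> = sum ?F {p \<in> ?P. fst p < snd p \<or> snd p + 1 < fst p}
      + sum ?F {p \<in> ?P. fst p = snd p \<or> fst p = snd p + 1}"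
    by (rule sum.union_disjoint) auto
  also have "\<dots> = lin_ext (conj_homotopy G t) (bar_d_gen G x) y
      + (-1)^Suc m * (map_basis (conjugate G t) x y - basis_chain x y)"
    unfolding bar_face_insert_conj_off_diagonal[OF x t Suc] bar_face_insert_conj_diagonal[OF x t Suc]
      lin_ext_conj_homotopy_bar_d_gen[OF Suc] ..
  finally show ?thesis using Suc by simp
qed

end

lemma (in group) bar_d_conj_homotopy:
  assumes c: "c \<in> chains (carrier G) k" and t: "t \<in> carrier G"
  shows "bar_d G (lin_ext (conj_homotopy G t) c) y - lin_ext (conj_homotopy G t) (bar_d G c) y =
         (-1)^k * (lin_ext (map_basis (conjugate G t)) c y - c y)"
proof -
  have f: "finite_support c" by (rule chains_finite_support[OF c])
  have "bar_d G (lin_ext (conj_homotopy G t) c) y - lin_ext (conj_homotopy G t) (bar_d G c) y =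
      lin_ext (\<lambda>x y. lin_ext (bar_d_gen G) (conj_homotopy G t x) y
        - lin_ext (conj_homotopy G t) (bar_d_gen G x) y) c y"
    unfolding bar_d_eq_lin_ext
    by (simp add: lin_ext_lin_ext[OF f finite_support_conj_homotopy]
        lin_ext_lin_ext[OF f finite_support_bar_d_gen] lin_ext_fun_diff)
  also have "\<dots> = lin_ext (\<lambda>x y. (-1)^k * (map_basis (conjugate G t) x y - basis_chain x y)) c y"
    by (rule arg_cong[where f = "\<lambda>h. h y"], rule lin_ext_cong, rule ext)
       (use chainsD[OF c] lin_ext_bar_d_conj_homotopy_gen t in auto)
  also have "\<dots> = (-1)^k * (lin_ext (map_basis (conjugate G t)) c y - lin_ext basis_chain c y)"
    by (simp only: lin_ext_fun_diff lin_ext_fun_scale)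
  finally show ?thesis by (simp add: lin_ext_basis_chain[OF f])
qed

lemma map_basis_in_chains:
  assumes "c \<in> chains A k" "\<And>a. a \<in> A \<Longrightarrow> f a \<in> B"
  shows "lin_ext (map_basis f) c \<in> chains B k"
proof (rule lin_ext_in_chains[OF chains_finite_support[OF assms(1)]])
  fix x assume "c x \<noteq> 0"
  with assms show "map_basis f x \<in> chains B k"
    by (auto simp: chains_def map_basis_def basis_chain_def dest: chainsD)
qed

lemma lin_ext_map_basis_fixed:
  assumes "c \<in> chains A k" "\<And>a. a \<in> A \<Longrightarrow> f a = a"
  shows "lin_ext (map_basis f) c = c"
proof -
  have "lin_ext (map_basis f) c = lin_ext basis_chain c"
  proof (rule lin_ext_cong)
    fix x assume "c x \<noteq> 0"
    then have "set x \<subseteq> A" using chainsD[OF assms(1)] by blast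
    then have "map f x = x" using assms(2) by (auto intro: map_idI)
    then show "map_basis f x = basis_chain x" by (simp add: map_basis_def)
  qed
  then show ?thesis using lin_ext_basis_chain[OF chains_finite_support[OF assms(1)]] by simp
qed

lemma (in group) conj_homotopy_in_chains:
  assumes c: "c \<in> chains (carrier G) k" and t: "t \<in> carrier G"
  shows "lin_ext (conj_homotopy G t) c \<in> chains (carrier G) (Suc k)"
proof (rule lin_ext_in_chains[OF chains_finite_support[OF c]])
  fix x assume "c x \<noteq> 0"
  then have "length x = k" "set x \<subseteq> carrier G" using chainsD[OF c] by auto
  then show "conj_homotopy G t x \<in> chains (carrier G) (Suc k)"
    unfolding conj_homotopy_def using t
    by (intro gen_sum_in_chains) (auto simp: insert_conj_def conjugate_closed dest: in_set_takeD in_set_dropD)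
qed

lemma cross_eq_lin_ext: "cross t c = lin_ext (cross_gen t) c"
  by (simp add: cross_def lin_ext_def)

lemma lin_ext_conj_homotopy_centralized:
  assumes "c \<in> chains H k" "\<And>h. h \<in> H \<Longrightarrow> conjugate G t h = h"
  shows "lin_ext (conj_homotopy G t) c = cross t c"
  unfolding cross_eq_lin_ext
proof (rule lin_ext_cong)
  fix x assume "c x \<noteq> 0"
  then have "set x \<subseteq> H" using chainsD[OF assms(1)] by blast
  then have "map (conjugate G t) (drop j x) = drop j x" for j
    using assms(2) by (auto intro!: map_idI dest: in_set_dropD)
  then show "conj_homotopy G t x = cross_gen t x"
    by (intro ext) (simp add: conj_homotopy_def gen_sum_def basis_chain_def cross_gen_def insert_conj_def)
qed

lemma (in group) cross_bar_d_centralized: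
  assumes H: "subgroup H G" and t: "t \<in> carrier G"
    and centr: "\<And>h. h \<in> H \<Longrightarrow> conjugate G t h = h" and w: "w \<in> chains H k"
  shows "cross t (bar_d G w) = bar_d G (lin_ext (conj_homotopy G t) w)"
proof
  fix y
  have "bar_d G w \<in> chains H (k - 1)"
    using bar_d_in_chains[OF _ w] subgroup.m_closed[OF H] by blast
  then have "lin_ext (conj_homotopy G t) (bar_d G w) = cross t (bar_d G w)"
    using centr by (rule lin_ext_conj_homotopy_centralized)
  moreover have "lin_ext (map_basis (conjugate G t)) w = w"
    using w centr by (rule lin_ext_map_basis_fixed)
  moreover have "w \<in> chains (carrier G) k"
    using chains_mono[OF subgroup.subset[OF H] w] .
  ultimately show "cross t (bar_d G w) y = bar_d G (lin_ext (conj_homotopy G t) w) y"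
    using bar_d_conj_homotopy[of w k t y] t by simp
qed

section \<open>Homology classes and their representatives\<close>

lemma mem_rel_class:
  "v \<in> rel_class G A B k z \<longleftrightarrow>
   (\<exists>w u. w \<in> chains A (Suc k) \<and> u \<in> chains B k \<and> v = (\<lambda>y. z y + (bar_d G w y + u y)))"
proof
  assume "v \<in> rel_class G A B k z"
  then show "\<exists>w u. w \<in> chains A (Suc k) \<and> u \<in> chains B k \<and> v = (\<lambda>y. z y + (bar_d G w y + u y))"
    by (auto simp: rel_class_def rel_bdry_def)
next
  assume "\<exists>w u. w \<in> chains A (Suc k) \<and> u \<in> chains B k \<and> v = (\<lambda>y. z y + (bar_d G w y + u y))"
  then obtain w u where "w \<in> chains A (Suc k)" "u \<in> chains B k" and v: "v = (\<lambda>y. z y + (bar_d G w y + u y))"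
    by blast
  then have "(\<lambda>y. bar_d G w y + u y) \<in> rel_bdry G A B k" by (auto simp: rel_bdry_def)
  with v show "v \<in> rel_class G A B k z" by (auto simp: rel_class_def)
qed

lemma mem_abs_class:
  "v \<in> abs_class G A k z \<longleftrightarrow> (\<exists>w. w \<in> chains A (Suc k) \<and> v = (\<lambda>y. z y + bar_d G w y))"
  unfolding abs_class_def abs_bdry_def by auto

lemma some_in_rel_class:
  obtains w u where "w \<in> chains A (Suc k)" "u \<in> chains B k"
    "(SOME v. v \<in> rel_class G A B k z) = (\<lambda>y. z y + (bar_d G w y + u y))"
proof -
  have "z \<in> rel_class G A B k z"
    unfolding mem_rel_class using zero_in_chains by (fastforce simp: bar_d_zero)
  then have "(SOME v. v \<in> rel_class G A B k z) \<in> rel_class G A B k z"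
    by (rule someI[where P = "\<lambda>v. v \<in> rel_class G A B k z"])
  then show ?thesis using that unfolding mem_rel_class by blast
qed

lemma some_in_abs_class:
  obtains w where "w \<in> chains A (Suc k)"
    "(SOME v. v \<in> abs_class G A k z) = (\<lambda>y. z y + bar_d G w y)"
proof -
  have "z \<in> abs_class G A k z"
    unfolding mem_abs_class using zero_in_chains by (fastforce simp: bar_d_zero)
  then have "(SOME v. v \<in> abs_class G A k z) \<in> abs_class G A k z"
    by (rule someI[where P = "\<lambda>v. v \<in> abs_class G A k z"])
  then show ?thesis using that unfolding mem_abs_class by blast
qed

lemma rel_class_eqI:
  assumes w: "w \<in> chains A (Suc k)" and u: "u \<in> chains B k"
    and e: "\<And>y. z1 y = z2 y + bar_d G w y + u y"
  shows "rel_class G A B k z1 = rel_class G A B k z2"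
proof
  show "rel_class G A B k z1 \<subseteq> rel_class G A B k z2"
  proof
    fix v assume "v \<in> rel_class G A B k z1"
    then obtain w' u' where w': "w' \<in> chains A (Suc k)" and u': "u' \<in> chains B k"
      and v: "v = (\<lambda>y. z1 y + (bar_d G w' y + u' y))" by (auto simp: mem_rel_class)
    have "v = (\<lambda>y. z2 y + (bar_d G (\<lambda>x. w x + w' x) y + (u y + u' y)))"
      using v e by (auto simp: algebra_simps bar_d_add[OF chains_finite_support[OF w] chains_finite_support[OF w']])
    then show "v \<in> rel_class G A B k z2"
      unfolding mem_rel_class using chains_add[OF w w'] chains_add[OF u u'] by blast
  qed
  show "rel_class G A B k z2 \<subseteq> rel_class G A B k z1"
  proof
    fix v assume "v \<in> rel_class G A B k z2"
    then obtain w' u' where w': "w' \<in> chains A (Suc k)" and u': "u' \<in> chains B k"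
      and v: "v = (\<lambda>y. z2 y + (bar_d G w' y + u' y))" by (auto simp: mem_rel_class)
    have "v = (\<lambda>y. z1 y + (bar_d G (\<lambda>x. w' x - w x) y + (u' y - u y)))"
      using v e by (auto simp: algebra_simps bar_d_diff[OF chains_finite_support[OF w'] chains_finite_support[OF w]])
    then show "v \<in> rel_class G A B k z1"
      unfolding mem_rel_class using chains_diff[OF w' w] chains_diff[OF u' u] by blast
  qed
qed

lemma abs_class_eqI:
  assumes w: "w \<in> chains A (Suc k)" and e: "\<And>y. z1 y = z2 y + bar_d G w y"
  shows "abs_class G A k z1 = abs_class G A k z2"
proof
  show "abs_class G A k z1 \<subseteq> abs_class G A k z2"
  proof
    fix v assume "v \<in> abs_class G A k z1"
    then obtain w' where w': "w' \<in> chains A (Suc k)" and v: "v = (\<lambda>y. z1 y + bar_d G w' y)"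
      by (auto simp: mem_abs_class)
    have "v = (\<lambda>y. z2 y + bar_d G (\<lambda>x. w x + w' x) y)"
      using v e by (auto simp: bar_d_add[OF chains_finite_support[OF w] chains_finite_support[OF w']])
    then show "v \<in> abs_class G A k z2"
      unfolding mem_abs_class using chains_add[OF w w'] by blast
  qed
  show "abs_class G A k z2 \<subseteq> abs_class G A k z1"
  proof
    fix v assume "v \<in> abs_class G A k z2"
    then obtain w' where w': "w' \<in> chains A (Suc k)" and v: "v = (\<lambda>y. z2 y + bar_d G w' y)"
      by (auto simp: mem_abs_class)
    have "v = (\<lambda>y. z1 y + bar_d G (\<lambda>x. w' x - w x) y)"
      using v e by (auto simp: bar_d_diff[OF chains_finite_support[OF w'] chains_finite_support[OF w]])
    then show "v \<in> abs_class G A k z1"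
      unfolding mem_abs_class using chains_diff[OF w' w] by blast
  qed
qed

lemma induced_incl_rel_class:
  assumes "A \<subseteq> A'" "B \<subseteq> B'"
  shows "induced_incl G A' B' k (rel_class G A B k z) = rel_class G A' B' k z"
proof -
  obtain w u where w: "w \<in> chains A (Suc k)" and u: "u \<in> chains B k"
    and v: "(SOME v. v \<in> rel_class G A B k z) = (\<lambda>y. z y + (bar_d G w y + u y))"
    by (rule some_in_rel_class)
  show ?thesis
    unfolding induced_incl_def v
    by (rule rel_class_eqI[OF chains_mono[OF assms(1) w] chains_mono[OF assms(2) u]]) simp
qed

lemma rel_scale_rel_class:
  "rel_scale G A B k n (rel_class G A B k z) = rel_class G A B k (\<lambda>y. n * z y)"
proof -
  obtain w u where w: "w \<in> chains A (Suc k)" and u: "u \<in> chains B k"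
    and v: "(SOME v. v \<in> rel_class G A B k z) = (\<lambda>y. z y + (bar_d G w y + u y))"
    by (rule some_in_rel_class)
  show ?thesis
    unfolding rel_scale_def v
    by (rule rel_class_eqI[OF chains_scale[OF w] chains_scale[OF u]])
       (simp add: bar_d_scale algebra_simps)
qed

lemma (in monoid) connecting_rel_class:
  assumes "A \<subseteq> carrier G" "finite_support z" "1 \<le> k"
  shows "connecting G B k (rel_class G A B k z) = abs_class G B (k - 1) (bar_d G z)"
proof -
  obtain w u where w: "w \<in> chains A (Suc k)" and u: "u \<in> chains B k"
    and v: "(SOME v. v \<in> rel_class G A B k z) = (\<lambda>y. z y + (bar_d G w y + u y))"
    by (rule some_in_rel_class)
  have dw: "finite_support (bar_d G w)"
    by (rule finite_support_bar_d[OF chains_finite_support[OF w]])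
  have u_fin: "finite_support u" by (rule chains_finite_support[OF u])
  have "bar_d G (\<lambda>y. z y + (bar_d G w y + u y)) y
      = bar_d G z y + (bar_d G (bar_d G w) y + bar_d G u y)" for y
    by (simp only: bar_d_add[OF assms(2) finite_support_add[OF dw u_fin]] bar_d_add[OF dw u_fin])
  then have "bar_d G (\<lambda>y. z y + (bar_d G w y + u y)) y = bar_d G z y + bar_d G u y" for y
    using bar_d_bar_d[OF chains_mono[OF assms(1) w]] by simp
  moreover have "u \<in> chains B (Suc (k - 1))" using u assms(3) by simp
  ultimately show ?thesis
    unfolding connecting_def v by (intro abs_class_eqI) auto
qed

lemma (in group) cross_hom_abs_class:
  assumes H: "subgroup H G" and t: "t \<in> carrier G"
    and centr: "\<And>h. h \<in> H \<Longrightarrow> conjugate G t h = h" and y: "finite_support y" and k: "1 \<le> k"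
  shows "cross_hom G t (carrier G) B k (abs_class G H (k - 1) y) = rel_class G (carrier G) B k (cross t y)"
proof -
  obtain w where w': "w \<in> chains H (Suc (k - 1))"
    and v: "(SOME v. v \<in> abs_class G H (k - 1) y) = (\<lambda>x. y x + bar_d G w x)"
    by (rule some_in_abs_class)
  have w: "w \<in> chains H k" using w' k by simp
  have "cross t (\<lambda>x. y x + bar_d G w x) x = cross t y x + cross t (bar_d G w) x" for x
    unfolding cross_eq_lin_ext
    by (rule lin_ext_add[OF y finite_support_bar_d[OF chains_finite_support[OF w]]])
  then have "cross t (\<lambda>x. y x + bar_d G w x) x
      = cross t y x + bar_d G (lin_ext (conj_homotopy G t) w) x" for x
    by (simp add: cross_bar_d_centralized[OF H t centr w])
  then show ?thesis
    unfolding cross_hom_def v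
    by (intro rel_class_eqI[OF conj_homotopy_in_chains[OF chains_mono[OF subgroup.subset[OF H] w] t]
          zero_in_chains]) simp
qed

section \<open>The relative class of a cycle\<close>

lemma (in group) rel_class_eq_cross_boundary:
  assumes A: "A \<subseteq> carrier G" and t: "t \<in> carrier G"
    and conj_A: "\<And>g. g \<in> A \<Longrightarrow> conjugate G t g \<in> B"
    and centr: "\<And>h. h \<in> H \<Longrightarrow> conjugate G t h = h"
    and z: "z \<in> chains A k" and dz: "bar_d G z \<in> chains H (k - 1)"
  shows "rel_class G (carrier G) B k z = rel_class G (carrier G) B k (\<lambda>y. (-1)^k * cross t (bar_d G z) y)"
proof (rule rel_class_eqI)
  let ?S = "lin_ext (conj_homotopy G t)" and ?C = "lin_ext (map_basis (conjugate G t))"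
  have zG: "z \<in> chains (carrier G) k" by (rule chains_mono[OF A z])
  show "(\<lambda>x. (-1)^Suc k * ?S z x) \<in> chains (carrier G) (Suc k)"
    by (intro chains_scale conj_homotopy_in_chains[OF zG t])
  show "?C z \<in> chains B k"
    by (rule map_basis_in_chains[OF z conj_A])
  fix y
  have "bar_d G (?S z) y - cross t (bar_d G z) y = (-1)^k * (?C z y - z y)"
    using bar_d_conj_homotopy[OF zG t, of y] lin_ext_conj_homotopy_centralized[OF dz centr] by simp
  then show "z y = (-1)^k * cross t (bar_d G z) y + bar_d G (\<lambda>x. (-1)^Suc k * ?S z x) y + ?C z y"
    unfolding bar_d_scale by (cases "even k") (simp_all add: algebra_simps)
qed

theorem lemma2p5:
  fixes G :: "('a, 'b) monoid_scheme" and H G1 G2 :: "'a set" and t :: 'a and k :: nat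
  assumes "group G"
    and "subgroup H G" and "subgroup G1 G" and "subgroup G2 G"
    and "H \<subseteq> G1" and "H \<subseteq> G2"
    and "t \<in> carrier G"
    and "(\<lambda>g. inv\<^bsub>G\<^esub> t \<otimes>\<^bsub>G\<^esub> g \<otimes>\<^bsub>G\<^esub> t) ` G1 = G2"
    and "\<forall>h\<in>H. inv\<^bsub>G\<^esub> t \<otimes>\<^bsub>G\<^esub> h \<otimes>\<^bsub>G\<^esub> t = h"
    and "k \<ge> 1"
  shows "\<forall>X \<in> rel_homology G G1 H k.
           induced_incl G (carrier G) G2 k X =
           rel_scale G (carrier G) G2 k ((-1) ^ k)
             (cross_hom G t (carrier G) G2 k (connecting G H k X))"
proof
  interpret group G by fact
  have G1: "G1 \<subseteq> carrier G" using subgroup.subset[OF assms(3)] .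
  have conj_G1: "\<And>g. g \<in> G1 \<Longrightarrow> conjugate G t g \<in> G2" using assms(8) by (auto simp: conjugate_def)
  have centr: "\<And>h. h \<in> H \<Longrightarrow> conjugate G t h = h" using assms(9) by (simp add: conjugate_def)
  fix X assume "X \<in> rel_homology G G1 H k"
  then obtain z where z: "z \<in> chains G1 k" and dz: "bar_d G z \<in> chains H (k - 1)"
    and X: "X = rel_class G G1 H k z"
    by (auto simp: rel_homology_def rel_cycles_def)
  have "induced_incl G (carrier G) G2 k X = rel_class G (carrier G) G2 k z"
    unfolding X using G1 assms(6) by (rule induced_incl_rel_class)
  also have "\<dots> = rel_class G (carrier G) G2 k (\<lambda>y. (-1)^k * cross t (bar_d G z) y)"
    by (rule rel_class_eq_cross_boundary[OF G1 assms(7) conj_G1 centr z dz])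
  also have "\<dots> = rel_scale G (carrier G) G2 k ((-1)^k) (rel_class G (carrier G) G2 k (cross t (bar_d G z)))"
    by (rule rel_scale_rel_class[symmetric])
  also have "\<dots> = rel_scale G (carrier G) G2 k ((-1)^k)
      (cross_hom G t (carrier G) G2 k (connecting G H k X))"
    using cross_hom_abs_class[OF assms(2,7) centr chains_finite_support[OF dz] assms(10), of G2]
    by (simp add: X connecting_rel_class[OF G1 chains_finite_support[OF z] assms(10)])
  finally show "induced_incl G (carrier G) G2 k X = rel_scale G (carrier G) G2 k ((-1)^k)
      (cross_hom G t (carrier G) G2 k (connecting G H k X))" .
qed

end
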